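(* Let $f\ge0$ be integrable on $[-\pi,\pi]$ with $\int f>0$ and let $\sigma_n^2(f)=\min_{q\in\mathcal{Q}_n(1)}\int_{-\pi}^{\pi}|q(e^{i\lambda})|^2f(\lambda)\,d\lambda$. If $\sigma_n^2(f)$ decreases to zero exponentially, i.e. $\limsup_{n\to\infty}\sqrt[n]{\sigma_n^2(f)}<1$, then for every neighborhood $U$ of $0$ the set $\{\lambda\in U: f(\lambda)=0\}$ has positive Lebesgue measure.
   Context: $\mathcal{Q}_n(1)$ denotes the set of complex polynomials of degree at most $n$ with $q(1)=1$; $\sigma_n^2(f)$ is the variance of the BLUE of the constant mean of a stationary process with spectral density $f$ from $n+1$ consecutive observations. *)

theory Defs
  imports "HOL-Analysis.Analysis" "HOL-Computational_Algebra.Polynomial"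
begin

definition Qn1 :: "nat \<Rightarrow> complex poly set" where
  "Qn1 n = {q. degree q \<le> n \<and> poly q 1 = 1}"

text \<open>sigma_n^2(f) = min over q in Q_n(1) of the integral over [-pi,pi]
  of |q(e^{i l})|^2 f(l) (Lebesgue integral); the minimum is attained, so we use INF.\<close>
definition sigma2 :: "nat \<Rightarrow> (real \<Rightarrow> real) \<Rightarrow> real" where
  "sigma2 n f = (INF q \<in> Qn1 n. LINT l:{-pi..pi}|lebesgue. (cmod (poly q (cis l)))^2 * f l)"

end

(*
  Suppose the zero set of f near 0 were null. Then f > 0 almost everywhere on some [0, d], so
  f >= epsilon on a closed set K that fills [0, d] up to measure gamma. For q in Q_n(1),
  Markov's inequality shows that |q(e^(i l))|^2 <= M on a subset F of K with |F| >= |K| - gamma,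
  unless the weighted integral of |q|^2 exceeds epsilon * gamma * M. A Remez-type inequality
  rules this out for M < 1 / remez_bound d rho n ^ 2: pick nodes x_i in F at which the
  distribution function of F reaches the quadratic levels |F| i^2 / (n+1)^2 and recover
  q(1) = 1 by Lagrange interpolation at the points e^(i x_i); the Lagrange weights at 1 are at
  most 2 e^(8 (n+1) rho) / cos^n d. Hence sigma_n^2(f) >= epsilon * gamma / remez_bound d rho n ^ 2,
  which decays only like (cos^2 d * e^(-16 rho))^n. Letting d, rho -> 0 beats every geometric
  rate r^n with r < 1.
*)

theory Submission
  imports Defs
begin

lemma norm_one_minus_cis_le: "cmod (1 - cis a) \<le> \<bar>a\<bar>"
proof -
  have "(cmod (1 - cis a))^2 = (1 - cos a)^2 + (sin a)^2"
    by (simp add: cmod_power2)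
  also have "\<dots> = 2 - 2 * cos a"
    using sin_cos_squared_add[of a] by (simp add: power2_eq_square algebra_simps)
  also have "\<dots> = 4 * (sin (a/2))^2"
    using cos_double_sin[of "a/2"] by simp
  also have "\<dots> \<le> 4 * (a/2)^2"
    using abs_sin_x_le_abs_x[of "a/2"] by (simp only: abs_le_square_iff mult_le_cancel_left_pos)
  also have "\<dots> = \<bar>a\<bar>^2" by (simp add: power2_eq_square)
  finally show ?thesis by (simp add: abs_le_square_iff[symmetric])
qed

lemma cos_mult_abs_diff_le_norm_cis_diff:
  assumes "a \<in> {0..d}" "b \<in> {0..d}" "d \<le> pi"
  shows "cos d * \<bar>a - b\<bar> \<le> cmod (cis a - cis b)"
proof -
  have mvt: "cos d * (y - x) \<le> \<bar>sin y - sin x\<bar>" if "0 \<le> x" "x < y" "y \<le> d" for x y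
  proof -
    have "\<exists>z. x < z \<and> z < y \<and> sin y - sin x = (y - x) * cos z"
      by (rule MVT2) (use that in \<open>auto intro: DERIV_sin\<close>)
    then obtain z where z: "x < z" "z < y" "sin y - sin x = (y - x) * cos z" by blast
    have "cos d \<le> cos z" using z that assms by (intro cos_monotone_0_pi_le) auto
    then have "cos d * (y - x) \<le> cos z * (y - x)" using that by (intro mult_right_mono) auto
    also have "\<dots> \<le> \<bar>sin y - sin x\<bar>" using z by (simp add: mult.commute)
    finally show ?thesis .
  qed
  have "cos d * \<bar>a - b\<bar> \<le> \<bar>sin a - sin b\<bar>"
    using mvt[of a b] mvt[of b a] assms by (cases a b rule: linorder_cases) (auto simp: abs_minus_commute)
  also have "\<dots> = \<bar>Im (cis a - cis b)\<bar>" by simp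
  also have "\<dots> \<le> cmod (cis a - cis b)" by (rule abs_Im_le_cmod)
  finally show ?thesis .
qed

lemma one_plus_sq_le_exp_sqrt:
  assumes "0 \<le> y" shows "1 + y^2 \<le> exp (4 * sqrt y)"
proof -
  have "1 + y \<le> (1 + sqrt y)^2" using assms by (simp add: power2_eq_square algebra_simps)
  also have "\<dots> \<le> (exp (sqrt y))^2"
    using exp_ge_add_one_self[of "sqrt y"] assms by (intro power_mono) auto
  finally have "1 + y \<le> exp (2 * sqrt y)" by (simp add: power2_eq_square exp_add[symmetric])
  have "1 + y^2 \<le> (1 + y)^2" using assms by (simp add: power2_eq_square algebra_simps)
  also have "\<dots> \<le> (exp (2 * sqrt y))^2" using \<open>1 + y \<le> exp (2 * sqrt y)\<close> assms by (intro power_mono) auto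
  also have "\<dots> = exp (4 * sqrt y)" by (simp add: power2_eq_square exp_add[symmetric])
  finally show ?thesis .
qed

lemma sum_inverse_sqrt_le: "(\<Sum>j=1..N. 1 / sqrt (real j)) \<le> 2 * sqrt (real N)"
proof (induction N)
  case 0 then show ?case by simp
next
  case (Suc N)
  have "1 = (sqrt (real (Suc N)) - sqrt (real N)) * (sqrt (real (Suc N)) + sqrt (real N))"
    by (simp add: algebra_simps)
  also have "\<dots> \<le> (sqrt (real (Suc N)) - sqrt (real N)) * (2 * sqrt (real (Suc N)))"
    by (intro mult_left_mono) auto
  finally have "1 / sqrt (real (Suc N)) \<le> 2 * sqrt (real (Suc N)) - 2 * sqrt (real N)"
    by (simp add: field_simps)
  then show ?case using Suc by simp
qed

lemma prod_one_plus_sq_div_sq_le_exp: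
  assumes "0 \<le> c"
  shows "(\<Prod>j=1..N. 1 + c^2 / (real j)^2) \<le> exp (8 * sqrt c * sqrt (real N))"
proof -
  have "(\<Prod>j=1..N. 1 + c^2 / (real j)^2) \<le> (\<Prod>j=1..N. exp (4 * sqrt (c / real j)))"
    using one_plus_sq_le_exp_sqrt[of "c / real _"] assms
    by (intro prod_mono) (auto simp: power_divide)
  also have "\<dots> = exp (4 * sqrt c * (\<Sum>j=1..N. 1 / sqrt (real j)))"
    by (simp add: exp_sum sum_distrib_left real_sqrt_divide)
  also have "\<dots> \<le> exp (8 * sqrt c * sqrt (real N))"
    using mult_left_mono[OF sum_inverse_sqrt_le, of "4 * sqrt c" N] assms by simp
  finally show ?thesis .
qed

lemma fact_add_sq_le: "(fact (m + i) :: real)^2 \<le> fact m * fact (m + 2 * i)"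
proof (induction i)
  case 0 then show ?case by (simp add: power2_eq_square)
next
  case (Suc i)
  have "(fact (m + Suc i) :: real) = fact (m + i) * real (m + i + 1)"
    by (simp add: algebra_simps)
  then have "(fact (m + Suc i) :: real)^2 = (fact (m + i))^2 * (real (m + i + 1))^2"
    by (simp add: power_mult_distrib)
  also have "\<dots> \<le> (fact m * fact (m + 2 * i)) * (real (m + 2*i + 1) * real (m + 2*i + 2))"
    using Suc by (intro mult_mono) (auto simp: power2_eq_square mult_mono)
  also have "\<dots> = fact m * fact (m + 2 * Suc i)"
    by (simp add: algebra_simps)
  finally show ?case .
qed

lemma prod_add_const_eq_fact_div: "(\<Prod>j=1..n. real j + real i) = fact (n + i) / fact i"
  by (induction n) (simp_all add: prod.cl_ivl_Suc algebra_simps)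

lemma prod_abs_diff_remove_eq_fact:
  assumes "i \<in> {1..N}"
  shows "(\<Prod>j\<in>{1..N}-{i}. \<bar>real j - real i\<bar>) = fact (i - 1) * fact (N - i)"
proof -
  have split: "{1..N}-{i} = {1..<i} \<union> {i+1..N}" using assms by auto
  have "(\<Prod>j\<in>{1..N}-{i}. \<bar>real j - real i\<bar>)
      = (\<Prod>j\<in>{1..<i}. \<bar>real j - real i\<bar>) * (\<Prod>j\<in>{i+1..N}. \<bar>real j - real i\<bar>)"
    unfolding split by (rule prod.union_disjoint) auto
  also have "(\<Prod>j\<in>{1..<i}. \<bar>real j - real i\<bar>) = (\<Prod>j=1..i-1. real j)"
    by (rule prod.reindex_bij_witness[where i = "\<lambda>b. i - b" and j = "\<lambda>a. i - a"]) auto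
  also have "(\<Prod>j\<in>{i+1..N}. \<bar>real j - real i\<bar>) = (\<Prod>j=1..N-i. real j)"
    by (rule prod.reindex_bij_witness[where i = "\<lambda>b. b + i" and j = "\<lambda>a. a - i"]) auto
  finally show ?thesis by (simp add: fact_prod)
qed

lemma prod_sq_div_abs_sq_diff_le_2:
  assumes i: "i \<in> {1..N}"
  shows "(\<Prod>j\<in>{1..N}-{i}. (real j)^2 / \<bar>(real j)^2 - (real i)^2\<bar>) \<le> 2"
proof -
  have remove: "(\<Prod>j\<in>{1..N}-{i}. g j) = (\<Prod>j=1..N. g j) / g i" if "g i \<noteq> 0" for g :: "nat \<Rightarrow> real"
    using i that prod.remove[of "{1..N}" i g] by (simp add: field_simps)
  have prod_id: "(\<Prod>j\<in>{1..N}-{i}. real j) = fact N / real i"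
    using remove[of real] i by (simp add: fact_prod)
  have prod_add: "(\<Prod>j\<in>{1..N}-{i}. real j + real i) = fact (N + i) / fact i / (2 * real i)"
    using remove[of "\<lambda>j. real j + real i"] i unfolding prod_add_const_eq_fact_div by simp
  have "(\<Prod>j\<in>{1..N}-{i}. (real j)^2 / \<bar>(real j)^2 - (real i)^2\<bar>)
      = (\<Prod>j\<in>{1..N}-{i}. real j)^2 / ((\<Prod>j\<in>{1..N}-{i}. \<bar>real j - real i\<bar>) * (\<Prod>j\<in>{1..N}-{i}. real j + real i))"
    by (simp add: square_diff_square_factored abs_mult prod_dividef prod.distrib power2_eq_square)
  also have "\<dots> = (fact N / real i)^2 / (fact (i - 1) * fact (N - i) * (fact (N + i) / fact i / (2 * real i)))"
    using i by (simp only: prod_id prod_add prod_abs_diff_remove_eq_fact)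
  also have "\<dots> = 2 * (fact N)^2 / (fact (N - i) * fact (N + i))"
    using i by (simp add: fact_reduce[of i] field_simps power2_eq_square)
  also have "\<dots> \<le> 2"
    using fact_add_sq_le[of "N - i" i] i by (simp add: field_simps)
  finally show ?thesis .
qed

lemma lagrange_interpolation:
  fixes q :: "'a::field poly" and z :: "'b \<Rightarrow> 'a"
  assumes A: "finite A" and inj: "inj_on z A" and deg: "degree q < card A"
  shows "poly q w = (\<Sum>i\<in>A. poly q (z i) * (\<Prod>j\<in>A-{i}. (w - z j) / (z i - z j)))"
proof -
  define p where "p = (\<Sum>i\<in>A. smult (poly q (z i)) (\<Prod>j\<in>A-{i}. smult (1 / (z i - z j)) [:- z j, 1:]))"
  have poly_p: "poly p x = (\<Sum>i\<in>A. poly q (z i) * (\<Prod>j\<in>A-{i}. (x - z j) / (z i - z j)))" for x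
    unfolding p_def by (simp add: poly_sum poly_prod diff_divide_distrib algebra_simps)
  have "degree p \<le> card A - 1"
    unfolding p_def
  proof (intro degree_sum_le order.trans[OF degree_smult_le])
    fix i assume "i \<in> A"
    have "degree (\<Prod>j\<in>A-{i}. smult (1 / (z i - z j)) [:- z j, 1:]) \<le> (\<Sum>j\<in>A-{i}. 1)"
      using A by (intro order.trans[OF degree_prod_sum_le] sum_mono) (auto intro: order.trans[OF degree_smult_le])
    then show "degree (\<Prod>j\<in>A-{i}. smult (1 / (z i - z j)) [:- z j, 1:]) \<le> card A - 1"
      using \<open>i \<in> A\<close> A by simp
  qed (use A in auto)
  moreover have "poly p (z k) = poly q (z k)" if k: "k \<in> A" for k
  proof -
    have "z k \<noteq> z j" if "j \<in> A - {k}" for j using inj k that by (auto dest: inj_onD)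
    then have one: "(\<Prod>j\<in>A-{k}. (z k - z j) / (z k - z j)) = 1" by (intro prod.neutral) auto
    have "(\<Prod>j\<in>A-{i}. (z k - z j) / (z i - z j)) = 0" if "i \<in> A - {k}" for i
      using that k A by (intro prod_zero) auto
    then have zero: "(\<Sum>i\<in>A-{k}. poly q (z i) * (\<Prod>j\<in>A-{i}. (z k - z j) / (z i - z j))) = 0"
      by (intro sum.neutral) simp
    have "poly p (z k) = poly q (z k) * (\<Prod>j\<in>A-{k}. (z k - z j) / (z k - z j))
        + (\<Sum>i\<in>A-{k}. poly q (z i) * (\<Prod>j\<in>A-{i}. (z k - z j) / (z i - z j)))"
      unfolding poly_p by (rule sum.remove[OF A k])
    then show ?thesis unfolding one zero by simp
  qed
  ultimately have "p = q"
    using deg inj by (intro poly_eqI_degree[where A = "z ` A"]) (auto simp: card_image)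
  then show ?thesis by (simp add: poly_p[symmetric])
qed

lemma norm_poly_le_by_lagrange:
  fixes q :: "'a::real_normed_field poly" and z :: "'b \<Rightarrow> 'a" and m B :: real
  assumes "finite A" "inj_on z A" "degree q < card A" "0 \<le> m"
    and at_nodes: "\<And>i. i \<in> A \<Longrightarrow> norm (poly q (z i)) \<le> m"
    and basis: "\<And>i. i \<in> A \<Longrightarrow> norm (\<Prod>j\<in>A-{i}. (w - z j) / (z i - z j)) \<le> B"
  shows "norm (poly q w) \<le> card A * m * B"
proof -
  have "norm (poly q w) \<le> (\<Sum>i\<in>A. norm (poly q (z i)) * norm (\<Prod>j\<in>A-{i}. (w - z j) / (z i - z j)))"
    unfolding lagrange_interpolation[OF assms(1-3), of w] by (rule norm_sum[THEN order.trans]) (simp add: norm_mult)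
  also have "\<dots> \<le> (\<Sum>i\<in>A. m * B)"
    using at_nodes basis \<open>0 \<le> m\<close> by (intro sum_mono mult_mono) auto
  finally show ?thesis by simp
qed

definition mass_upto :: "real set \<Rightarrow> real \<Rightarrow> real" where
  "mass_upto F x = measure lebesgue (F \<inter> {..x})"

lemma mass_upto_lipschitz:
  assumes F: "F \<in> lmeasurable"
  shows "\<bar>mass_upto F x - mass_upto F y\<bar> \<le> \<bar>x - y\<bar>"
proof -
  have mono: "mass_upto F a \<le> mass_upto F b" and jump: "mass_upto F b \<le> mass_upto F a + (b - a)"
    if "a \<le> b" for a b
  proof -
    have meas: "F \<inter> {..c} \<in> lmeasurable" for c using F by (intro fmeasurable_Int_fmeasurable) auto
    show "mass_upto F a \<le> mass_upto F b"
      unfolding mass_upto_def using that meas by (intro measure_mono_fmeasurable) auto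
    have "mass_upto F b \<le> measure lebesgue ((F \<inter> {..a}) \<union> {a..b})"
      unfolding mass_upto_def using meas by (intro measure_mono_fmeasurable) auto
    also have "\<dots> \<le> mass_upto F a + measure lebesgue {a..b}"
      unfolding mass_upto_def using meas by (intro measure_Un_le) auto
    finally show "mass_upto F b \<le> mass_upto F a + (b - a)" using that by simp
  qed
  show ?thesis
    using mono[of x y] jump[of x y] mono[of y x] jump[of y x] by (cases "x \<le> y") auto
qed

lemma continuous_on_mass_upto: "F \<in> lmeasurable \<Longrightarrow> continuous_on S (mass_upto F)"
  by (intro lipschitz_on_continuous_on[of 1] lipschitz_onI) (auto simp: dist_real_def mass_upto_lipschitz)

lemma mass_upto_gap:
  assumes F: "F \<in> lmeasurable" "F \<subseteq> {a..b}" and x: "a \<le> x" "x \<le> b"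
  shows "(x - a) - mass_upto F x \<le> (b - a) - measure lebesgue F"
proof -
  have "x - a = measure lebesgue {a..x}" using x by simp
  also have "\<dots> \<le> measure lebesgue ((F \<inter> {..x}) \<union> ({a..b} - F))"
    using x F by (intro measure_mono_fmeasurable fmeasurable.Un fmeasurable.Diff)
      (auto intro: fmeasurable_Int_fmeasurable)
  also have "\<dots> \<le> mass_upto F x + measure lebesgue ({a..b} - F)"
    unfolding mass_upto_def using F by (intro measure_Un_le) (auto intro: fmeasurable_Int_fmeasurable)
  also have "measure lebesgue ({a..b} - F) = (b - a) - measure lebesgue F"
    using F x by (subst measure_Diff) auto
  finally show ?thesis by simp
qed

lemma mass_upto_attains:
  assumes F: "compact F" and t: "0 < t" "t \<le> measure lebesgue F"
  shows "\<exists>x\<in>F. mass_upto F x = t"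
proof -
  have Fm: "F \<in> lmeasurable" using F by (rule lmeasurable_compact)
  have "F \<noteq> {}" using t by auto
  then obtain a b where ab: "\<forall>x\<in>F. a \<le> x \<and> x \<le> b"
    using compact_attains_inf[OF F] compact_attains_sup[OF F] by metis
  have "F \<inter> {..a - 1} = {}" "F \<inter> {..b} = F" using ab by force+
  then have "mass_upto F (a - 1) \<le> t" "t \<le> mass_upto F b"
    using t by (auto simp: mass_upto_def)
  moreover have "a - 1 \<le> b" using ab \<open>F \<noteq> {}\<close> by force
  ultimately obtain y where y: "mass_upto F y = t"
    using IVT'[of "mass_upto F"] continuous_on_mass_upto[OF Fm] by blast
  then have "F \<inter> {..y} \<noteq> {}" using t by (auto simp: mass_upto_def)
  moreover have "compact (F \<inter> {..y})" using F by (intro compact_Int_closed) auto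
  ultimately obtain x where x: "x \<in> F \<inter> {..y}" "\<forall>x'\<in>F \<inter> {..y}. x' \<le> x"
    using compact_attains_sup by blast
  then have "F \<inter> {..x} = F \<inter> {..y}" by auto
  then show ?thesis using x y unfolding mass_upto_def by (metis IntD1)
qed

(* Quadratic levels keep the Lagrange weights bounded (prod_sq_div_abs_sq_diff_le_2) while
   forcing the first nodes close to 0, where |1 - cis x| is small. *)
lemma remez_nodes:
  fixes F :: "real set" and N :: nat
  defines "u \<equiv> measure lebesgue F / (real N)^2"
  assumes F: "compact F" "F \<subseteq> {0..d}" and pos: "0 < measure lebesgue F"
  obtains x where "\<And>i. i \<in> {1..N} \<Longrightarrow> x i \<in> F"
    and "\<And>i j. i \<in> {1..N} \<Longrightarrow> j \<in> {1..N} \<Longrightarrow> u * \<bar>(real i)^2 - (real j)^2\<bar> \<le> \<bar>x i - x j\<bar>"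
    and "\<And>j. j \<in> {1..N} \<Longrightarrow> x j \<le> u * (real j)^2 + (d - measure lebesgue F)"
proof -
  have Fm: "F \<in> lmeasurable" using F(1) by (rule lmeasurable_compact)
  have u: "0 \<le> u" by (simp add: u_def)
  have "\<exists>x\<in>F. mass_upto F x = u * (real i)^2" if "i \<in> {1..N}" for i
  proof (rule mass_upto_attains[OF F(1)])
    have "(real i)^2 \<le> (real N)^2" using that by (intro power_mono) auto
    then show "u * (real i)^2 \<le> measure lebesgue F"
      using that pos by (simp add: u_def field_simps)
  qed (use that pos in \<open>simp add: u_def\<close>)
  then obtain x where x: "\<And>i. i \<in> {1..N} \<Longrightarrow> x i \<in> F \<and> mass_upto F (x i) = u * (real i)^2"
    by metis
  show thesis
  proof
    show "x i \<in> F" if "i \<in> {1..N}" for i using x[OF that] by blast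
    show "u * \<bar>(real i)^2 - (real j)^2\<bar> \<le> \<bar>x i - x j\<bar>" if "i \<in> {1..N}" "j \<in> {1..N}" for i j
      using mass_upto_lipschitz[OF Fm, of "x i" "x j"] x[OF that(1)] x[OF that(2)] u
      by (simp add: abs_mult abs_of_nonneg flip: right_diff_distrib)
    show "x j \<le> u * (real j)^2 + (d - measure lebesgue F)" if "j \<in> {1..N}" for j
      using mass_upto_gap[OF Fm F(2), of "x j"] x[OF that] F(2) by auto
  qed
qed

lemma norm_cis_lagrange_factor_le:
  fixes x y u a b c :: real
  assumes xy: "x \<in> {0..d}" "y \<in> {0..d}" and d: "d \<le> pi" "0 < cos d"
    and pos: "0 < u" "0 < a" "a^2 \<noteq> b^2"
    and spacing: "u * \<bar>a^2 - b^2\<bar> \<le> \<bar>y - x\<bar>" and near: "x \<le> u * (a^2 + c^2)"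
  shows "cmod ((1 - cis x) / (cis y - cis x)) \<le> (1 + c^2 / a^2) * (a^2 / \<bar>a^2 - b^2\<bar>) / cos d"
proof -
  have num: "cmod (1 - cis x) \<le> u * (a^2 + c^2)"
    using norm_one_minus_cis_le[of x] xy near by simp
  have "cos d * (u * \<bar>a^2 - b^2\<bar>) \<le> cos d * \<bar>y - x\<bar>"
    using spacing d by (intro mult_left_mono) auto
  also have "\<dots> \<le> cmod (cis y - cis x)"
    using xy d by (intro cos_mult_abs_diff_le_norm_cis_diff) auto
  finally have den: "cos d * (u * \<bar>a^2 - b^2\<bar>) \<le> cmod (cis y - cis x)" .
  have "cmod ((1 - cis x) / (cis y - cis x)) = cmod (1 - cis x) / cmod (cis y - cis x)"
    by (simp add: norm_divide)
  also have "\<dots> \<le> u * (a^2 + c^2) / (cos d * (u * \<bar>a^2 - b^2\<bar>))"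
    using num den pos d by (intro frac_le) auto
  also have "\<dots> = (1 + c^2 / a^2) * (a^2 / \<bar>a^2 - b^2\<bar>) / cos d"
    using pos d by (simp add: field_simps)
  finally show ?thesis .
qed

lemma prod_lagrange_factor_bounds_le:
  assumes i: "i \<in> {1..N}" and "0 \<le> c" "0 < C"
  shows "(\<Prod>j\<in>{1..N}-{i}. (1 + c^2 / (real j)^2) * ((real j)^2 / \<bar>(real j)^2 - (real i)^2\<bar>) / C)
    \<le> 2 * exp (8 * sqrt c * sqrt (real N)) / C ^ (N - 1)"
proof -
  define g where "g j = 1 + c^2 / (real j)^2" for j
  define h where "h j = (real j)^2 / \<bar>(real j)^2 - (real i)^2\<bar>" for j
  have "(\<Prod>j\<in>{1..N}-{i}. g j) \<le> (\<Prod>j=1..N. g j)"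
    by (rule prod_mono2) (auto simp: g_def)
  also have "\<dots> \<le> exp (8 * sqrt c * sqrt (real N))"
    unfolding g_def using \<open>0 \<le> c\<close> by (rule prod_one_plus_sq_div_sq_le_exp)
  finally have "(\<Prod>j\<in>{1..N}-{i}. g j) * (\<Prod>j\<in>{1..N}-{i}. h j) \<le> exp (8 * sqrt c * sqrt (real N)) * 2"
    using prod_sq_div_abs_sq_diff_le_2[OF i] by (intro mult_mono) (auto simp: g_def h_def intro: prod_nonneg)
  moreover have "card ({1..N}-{i}) = N - 1" using i by simp
  ultimately have "(\<Prod>j\<in>{1..N}-{i}. g j * h j / C) \<le> 2 * exp (8 * sqrt c * sqrt (real N)) / C ^ (N - 1)"
    using \<open>0 < C\<close> by (simp add: prod_dividef prod.distrib divide_right_mono mult.commute)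
  then show ?thesis by (simp only: g_def h_def)
qed

lemma norm_cis_lagrange_basis_at_1_le:
  fixes x :: "nat \<Rightarrow> real"
  assumes x: "\<And>j. j \<in> {1..N} \<Longrightarrow> x j \<in> {0..d}" and d: "d \<le> pi" "0 < cos d"
    and "0 < u" "0 \<le> c" and i: "i \<in> {1..N}"
    and spacing: "\<And>j. j \<in> {1..N} \<Longrightarrow> u * \<bar>(real i)^2 - (real j)^2\<bar> \<le> \<bar>x i - x j\<bar>"
    and near: "\<And>j. j \<in> {1..N} \<Longrightarrow> x j \<le> u * ((real j)^2 + c^2)"
  shows "cmod (\<Prod>j\<in>{1..N}-{i}. (1 - cis (x j)) / (cis (x i) - cis (x j)))
    \<le> 2 * exp (8 * sqrt c * sqrt (real N)) / cos d ^ (N - 1)"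
proof -
  have "cmod (\<Prod>j\<in>{1..N}-{i}. (1 - cis (x j)) / (cis (x i) - cis (x j)))
      \<le> (\<Prod>j\<in>{1..N}-{i}. (1 + c^2 / (real j)^2) * ((real j)^2 / \<bar>(real j)^2 - (real i)^2\<bar>) / cos d)"
    unfolding prod_norm[symmetric]
  proof (intro prod_mono conjI norm_ge_zero)
    fix j assume "j \<in> {1..N}-{i}"
    then show "cmod ((1 - cis (x j)) / (cis (x i) - cis (x j)))
        \<le> (1 + c^2 / (real j)^2) * ((real j)^2 / \<bar>(real j)^2 - (real i)^2\<bar>) / cos d"
      using x[of i] x[of j] i d \<open>0 < u\<close> spacing[of j] near[of j]
      by (intro norm_cis_lagrange_factor_le) (auto simp: abs_minus_commute)
  qed
  also have "\<dots> \<le> 2 * exp (8 * sqrt c * sqrt (real N)) / cos d ^ (N - 1)"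
    using i \<open>0 \<le> c\<close> d by (intro prod_lagrange_factor_bounds_le) auto
  finally show ?thesis .
qed

definition remez_bound :: "real \<Rightarrow> real \<Rightarrow> nat \<Rightarrow> real" where
  "remez_bound d \<rho> n = 2 * real (n + 1) * exp (8 * real (n + 1) * \<rho>) / cos d ^ n"

theorem remez_type_inequality:
  fixes q :: "complex poly" and F :: "real set"
  assumes F: "compact F" "F \<subseteq> {0..d}" and d: "d \<le> pi" "0 < cos d"
    and mass: "0 < measure lebesgue F" "d \<le> (1 + \<rho>^4) * measure lebesgue F" and "0 \<le> \<rho>"
    and q: "poly q 1 = 1" "degree q \<le> n"
    and small: "\<And>x. x \<in> F \<Longrightarrow> cmod (poly q (cis x)) \<le> m"
  shows "1 \<le> m * remez_bound d \<rho> n"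
proof -
  define N where "N = n + 1"
  define u where "u = measure lebesgue F / (real N)^2"
  define c where "c = real N * \<rho>^2"
  obtain x where xF: "\<And>i. i \<in> {1..N} \<Longrightarrow> x i \<in> F"
    and spacing: "\<And>i j. i \<in> {1..N} \<Longrightarrow> j \<in> {1..N} \<Longrightarrow> u * \<bar>(real i)^2 - (real j)^2\<bar> \<le> \<bar>x i - x j\<bar>"
    and near: "\<And>j. j \<in> {1..N} \<Longrightarrow> x j \<le> u * (real j)^2 + (d - measure lebesgue F)"
    using remez_nodes[OF F mass(1), of N] unfolding u_def by metis
  have u: "0 < u" using mass by (simp add: u_def N_def)
  have "u * c^2 = \<rho>^4 * measure lebesgue F"
    by (simp add: u_def c_def N_def power_mult_distrib flip: power_mult)
  then have near': "x j \<le> u * ((real j)^2 + c^2)" if "j \<in> {1..N}" for j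
    using near[OF that] mass(2) by (simp add: distrib_left algebra_simps)
  have xd: "x i \<in> {0..d}" if "i \<in> {1..N}" for i using xF[OF that] F(2) by auto
  have inj: "inj_on (\<lambda>i. cis (x i)) {1..N}"
  proof (rule inj_onI)
    fix i j assume ij: "i \<in> {1..N}" "j \<in> {1..N}" "cis (x i) = cis (x j)"
    have "cos d * (u * \<bar>(real i)^2 - (real j)^2\<bar>) \<le> cos d * \<bar>x i - x j\<bar>"
      using spacing[OF ij(1,2)] d by (intro mult_left_mono) auto
    also have "\<dots> \<le> cmod (cis (x i) - cis (x j))"
      using xd[OF ij(1)] xd[OF ij(2)] d by (intro cos_mult_abs_diff_le_norm_cis_diff) auto
    finally show "i = j" using ij(3) u d by (simp add: mult_le_0_iff)
  qed
  have sqrt_c: "sqrt c * sqrt (real N) = real N * \<rho>"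
    using \<open>0 \<le> \<rho>\<close> by (simp add: c_def real_sqrt_mult)
  have basis: "cmod (\<Prod>j\<in>{1..N}-{i}. (1 - cis (x j)) / (cis (x i) - cis (x j)))
      \<le> 2 * exp (8 * real N * \<rho>) / cos d ^ n" if "i \<in> {1..N}" for i
    using norm_cis_lagrange_basis_at_1_le[OF xd d u _ that spacing[OF that] near'] \<open>0 \<le> \<rho>\<close>
    unfolding mult.assoc[of 8] sqrt_c by (simp add: c_def N_def)
  have "1 \<in> {1..N}" by (simp add: N_def)
  then have "0 \<le> m" using small[OF xF] by (meson norm_ge_zero order_trans)
  then have "cmod (poly q 1) \<le> card {1..N} * m * (2 * exp (8 * real N * \<rho>) / cos d ^ n)"
    using q xF small basis inj by (intro norm_poly_le_by_lagrange) (auto simp: N_def)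
  then show ?thesis using q by (simp add: remez_bound_def N_def algebra_simps)
qed

lemma set_borel_measurable_if_set_integrable:
  "set_integrable M S f \<Longrightarrow> set_borel_measurable M S f"
  unfolding set_integrable_def set_borel_measurable_def by (rule borel_measurable_integrable)

lemma measure_sublevel_ge_by_Markov:
  fixes h f :: "real \<Rightarrow> real"
  assumes hf: "set_integrable lebesgue S (\<lambda>x. h x * f x)" and S: "S \<in> sets lebesgue"
    and nonneg: "\<And>x. x \<in> S \<Longrightarrow> 0 \<le> h x" "\<And>x. x \<in> S \<Longrightarrow> 0 \<le> f x"
    and h: "h \<in> borel_measurable lebesgue"
    and K: "K \<in> lmeasurable" "K \<subseteq> S" "\<And>x. x \<in> K \<Longrightarrow> \<epsilon> \<le> f x"
    and pos: "0 < \<epsilon>" "0 < M" "0 \<le> \<gamma>"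
    and small: "(LINT x:S|lebesgue. h x * f x) \<le> \<epsilon> * M * \<gamma>"
  shows "measure lebesgue K - \<gamma> \<le> measure lebesgue (K \<inter> {x. h x \<le> M})"
proof -
  define B where "B = K \<inter> {x. M < h x}"
  have level_sets: "{x. M < h x} \<in> sets lebesgue" "{x. h x \<le> M} \<in> sets lebesgue"
    using h[unfolded borel_measurable_iff_greater, rule_format, of M]
      h[unfolded borel_measurable_iff_le, rule_format, of M] by simp_all
  have B: "B \<in> sets lebesgue" unfolding B_def using K(1) level_sets(1) by blast
  have "B \<subseteq> {x\<in>S. h x * f x \<ge> \<epsilon> * M}"
  proof
    fix x assume "x \<in> B"
    then have "x \<in> S" "M \<le> h x" "\<epsilon> \<le> f x" using K by (auto simp: B_def)
    then show "x \<in> {x\<in>S. h x * f x \<ge> \<epsilon> * M}" using pos mult_mono[of \<epsilon> "f x" M "h x"] by (simp add: mult.commute)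
  qed
  moreover have "{x\<in>S. h x * f x \<ge> \<epsilon> * M} \<in> sets lebesgue"
    using set_borel_measurable_sets[OF set_borel_measurable_if_set_integrable[OF hf] _ S, of "{\<epsilon> * M..}"]
    by (simp add: vimage_def Int_def conj_commute)
  ultimately have "emeasure lebesgue B \<le> emeasure lebesgue {x\<in>S. h x * f x \<ge> \<epsilon> * M}"
    by (rule emeasure_mono)
  also have "\<dots> \<le> ennreal (1 / (\<epsilon> * M) * (LINT x:S|lebesgue. h x * f x))"
    using nonneg pos by (intro integral_Markov_inequality' hf S) auto
  also have "\<dots> \<le> ennreal \<gamma>"
    using small pos by (intro ennreal_leI) (simp add: field_simps)
  finally have "measure lebesgue B \<le> \<gamma>"
    unfolding measure_def using pos by (intro enn2real_leI) auto
  moreover have "measure lebesgue K \<le> measure lebesgue (K \<inter> {x. h x \<le> M}) + measure lebesgue B"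
  proof -
    have "K = (K \<inter> {x. h x \<le> M}) \<union> B" by (auto simp: B_def)
    then show ?thesis using K(1) B level_sets by (metis measure_Un_le fmeasurableD sets.Int)
  qed
  ultimately show ?thesis by simp
qed

lemma set_integrable_continuous_mult:
  fixes h f :: "real \<Rightarrow> real"
  assumes "continuous_on UNIV h" "set_integrable lebesgue {a..b} f"
  shows "set_integrable lebesgue {a..b} (\<lambda>x. h x * f x)"
proof (rule absolutely_integrable_bounded_measurable_product_real)
  show "h \<in> borel_measurable (lebesgue_on {a..b})"
    using assms(1) by (intro continuous_imp_measurable_on_sets_lebesgue) (auto intro: continuous_on_subset)
  show "bounded (h ` {a..b})"
    using assms(1) by (intro compact_imp_bounded compact_continuous_image) (auto intro: continuous_on_subset)
qed (use assms(2) in auto)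

lemma one_le_mult_remez_bound_sq_if_integral_small:
  fixes f :: "real \<Rightarrow> real" and q :: "complex poly"
  assumes nonneg: "\<And>l. l \<in> {-pi..pi} \<Longrightarrow> 0 \<le> f l"
    and integrable: "set_integrable lebesgue {-pi..pi} f"
    and K: "closed K" "K \<subseteq> {0..d}" "\<And>x. x \<in> K \<Longrightarrow> \<epsilon> \<le> f x"
    and pos: "0 < \<epsilon>" "0 < \<gamma>" "0 < d" "0 \<le> \<rho>" and d: "d \<le> pi" "0 < cos d"
    and large: "d \<le> (1 + \<rho>^4) * (measure lebesgue K - \<gamma>)"
    and q: "poly q 1 = 1" "degree q \<le> n"
    and "0 < M" and small: "(LINT l:{-pi..pi}|lebesgue. (cmod (poly q (cis l)))^2 * f l) \<le> \<epsilon> * M * \<gamma>"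
  shows "1 \<le> M * remez_bound d \<rho> n ^ 2"
proof -
  define h where "h l = (cmod (poly q (cis l)))^2" for l
  define F where "F = K \<inter> {x. h x \<le> M}"
  have h_cont: "continuous_on UNIV h" unfolding h_def by (intro continuous_intros)
  have K_compact: "compact K"
    using K by (meson bounded_closed_interval bounded_subset compact_eq_bounded_closed)
  have F_compact: "compact F"
    unfolding F_def using K_compact h_cont by (intro compact_Int_closed closed_Collect_le continuous_intros) auto
  have "measure lebesgue K - \<gamma> \<le> measure lebesgue F"
    unfolding F_def
  proof (rule measure_sublevel_ge_by_Markov[OF _ _ _ nonneg _ _ _ K(3) pos(1) \<open>0 < M\<close> less_imp_le[OF pos(2)]])
    show "set_integrable lebesgue {-pi..pi} (\<lambda>l. h l * f l)"
      using h_cont integrable by (rule set_integrable_continuous_mult)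
    show "h \<in> borel_measurable lebesgue" using continuous_imp_measurable_on_sets_lebesgue[OF h_cont] by simp
    show "K \<in> lmeasurable" using K_compact by (rule lmeasurable_compact)
    show "K \<subseteq> {-pi..pi}" using K(2) d pi_gt3 by auto
    show "(LINT x:{-pi..pi}|lebesgue. h x * f x) \<le> \<epsilon> * M * \<gamma>" using small by (simp add: h_def)
  qed (simp_all add: h_def)
  then have "(1 + \<rho>^4) * (measure lebesgue K - \<gamma>) \<le> (1 + \<rho>^4) * measure lebesgue F"
    by (rule mult_left_mono) (simp add: add_nonneg_nonneg)
  with large have mass: "d \<le> (1 + \<rho>^4) * measure lebesgue F" by linarith
  then have "measure lebesgue F \<noteq> 0" using pos(3) by auto
  then have "0 < measure lebesgue F" by (metis measure_nonneg order_less_le)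
  have "1 \<le> sqrt M * remez_bound d \<rho> n"
  proof (rule remez_type_inequality[OF F_compact _ d \<open>0 < measure lebesgue F\<close> mass pos(4) q])
    show "F \<subseteq> {0..d}" using K(2) by (auto simp: F_def)
    show "cmod (poly q (cis x)) \<le> sqrt M" if "x \<in> F" for x
      using that by (auto simp: F_def h_def intro: real_le_rsqrt)
  qed
  then have "1 \<le> (sqrt M * remez_bound d \<rho> n)^2" by (simp add: one_le_power)
  then show ?thesis using \<open>0 < M\<close> by (simp add: power_mult_distrib)
qed

lemma integral_poly_weight_lower_bound:
  fixes f :: "real \<Rightarrow> real" and q :: "complex poly"
  assumes nonneg: "\<And>l. l \<in> {-pi..pi} \<Longrightarrow> 0 \<le> f l"
    and integrable: "set_integrable lebesgue {-pi..pi} f"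
    and K: "closed K" "K \<subseteq> {0..d}" "\<And>x. x \<in> K \<Longrightarrow> \<epsilon> \<le> f x"
    and pos: "0 < \<epsilon>" "0 < \<gamma>" "0 < d" "0 \<le> \<rho>" and d: "d \<le> pi" "0 < cos d"
    and large: "d \<le> (1 + \<rho>^4) * (measure lebesgue K - \<gamma>)"
    and q: "poly q 1 = 1" "degree q \<le> n"
  shows "\<epsilon> * \<gamma> \<le> (LINT l:{-pi..pi}|lebesgue. (cmod (poly q (cis l)))^2 * f l) * remez_bound d \<rho> n ^ 2"
proof (rule ccontr)
  define I where "I = (LINT l:{-pi..pi}|lebesgue. (cmod (poly q (cis l)))^2 * f l)"
  define W where "W = remez_bound d \<rho> n"
  have "0 < W" using d by (simp add: W_def remez_bound_def)
  assume "\<not> ?thesis"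
  then have "I * W^2 < \<epsilon> * \<gamma>" by (simp add: I_def W_def)
  then have "I / (\<epsilon> * \<gamma>) < 1 / W^2"
    using pos \<open>0 < W\<close> by (simp add: field_simps)
  moreover have "0 \<le> I" unfolding I_def set_lebesgue_integral_def
    by (intro Bochner_Integration.integral_nonneg) (auto simp: indicator_def nonneg)
  ultimately obtain M where M: "I / (\<epsilon> * \<gamma>) < M" "M < 1 / W^2" "0 < M"
    using dense pos by (metis divide_nonneg_pos le_less_trans mult_pos_pos)
  have "1 \<le> M * W^2" unfolding W_def
    using M pos by (intro one_le_mult_remez_bound_sq_if_integral_small[OF assms]) (auto simp: I_def field_simps)
  then show False using M(2) \<open>0 < W\<close> by (simp add: field_simps)
qed

lemma sigma2_ge_of_closed_subset:
  fixes f :: "real \<Rightarrow> real"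
  assumes nonneg: "\<And>l. l \<in> {-pi..pi} \<Longrightarrow> 0 \<le> f l"
    and integrable: "set_integrable lebesgue {-pi..pi} f"
    and K: "closed K" "K \<subseteq> {0..d}" "\<And>x. x \<in> K \<Longrightarrow> \<epsilon> \<le> f x"
    and pos: "0 < \<epsilon>" "0 < \<gamma>" "0 < d" "0 \<le> \<rho>" and d: "d \<le> pi" "0 < cos d"
    and large: "d \<le> (1 + \<rho>^4) * (measure lebesgue K - \<gamma>)"
  shows "\<epsilon> * \<gamma> / remez_bound d \<rho> n ^ 2 \<le> sigma2 n f"
  unfolding sigma2_def
proof (rule cINF_greatest)
  show "Qn1 n \<noteq> {}" by (auto simp: Qn1_def intro!: exI[of _ 1])
  have "0 < remez_bound d \<rho> n" using d by (simp add: remez_bound_def)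
  then show "\<epsilon> * \<gamma> / remez_bound d \<rho> n ^ 2 \<le> (LINT l:{-pi..pi}|lebesgue. (cmod (poly q (cis l)))^2 * f l)"
    if "q \<in> Qn1 n" for q
    using integral_poly_weight_lower_bound[OF assms, of q n] that by (simp add: Qn1_def divide_le_eq)
qed

lemma large_superlevel_set_of_AE_pos:
  fixes f :: "real \<Rightarrow> real"
  assumes f: "set_borel_measurable lebesgue S f" and S: "S \<in> lmeasurable"
    and pos: "AE x in lebesgue. x \<in> S \<longrightarrow> 0 < f x" and "0 < \<eta>"
  obtains \<epsilon> where "0 < \<epsilon>" "measure lebesgue S - \<eta> < measure lebesgue {x \<in> S. \<epsilon> \<le> f x}"
proof -
  define A where "A k = {x \<in> S. 1 / real (Suc k) \<le> f x}" for k
  have A_sets: "A k \<in> sets lebesgue" for k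
    using set_borel_measurable_sets[OF f _ fmeasurableD[OF S], of "{1 / real (Suc k)..}"]
    by (simp add: A_def vimage_def Int_def conj_commute)
  have "incseq A"
    by (rule incseq_SucI) (auto simp: A_def elim!: order.trans[rotated] intro: frac_le)
  have UA: "(\<Union>k. A k) = {x \<in> S. 0 < f x}"
  proof
    show "{x \<in> S. 0 < f x} \<subseteq> (\<Union>k. A k)"
    proof
      fix x assume x: "x \<in> {x \<in> S. 0 < f x}"
      then obtain k where "inverse (real (Suc k)) < f x" using reals_Archimedean by blast
      then have "x \<in> A k" using x by (auto simp: A_def inverse_eq_divide)
      then show "x \<in> (\<Union>k. A k)" by blast
    qed
  qed (auto simp: A_def elim: less_le_trans[rotated])
  have "measure lebesgue (\<Union>k. A k) = measure lebesgue S"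
  proof (rule measure_eq_AE)
    show "AE x in lebesgue. x \<in> (\<Union>k. A k) \<longleftrightarrow> x \<in> S"
      using pos unfolding UA by (auto elim: eventually_mono)
  qed (use A_sets S in auto)
  moreover have "(\<lambda>k. measure lebesgue (A k)) \<longlonglongrightarrow> measure lebesgue (\<Union>k. A k)"
  proof (rule Lim_measure_incseq)
    have "(\<Union>k. A k) \<in> lmeasurable" using fmeasurableI2[OF S, of "\<Union>k. A k"] A_sets by (auto simp: A_def)
    then show "emeasure lebesgue (\<Union>k. A k) \<noteq> \<infinity>" by (metis fmeasurableD2 infinity_ennreal_def)
  qed (use A_sets \<open>incseq A\<close> in auto)
  ultimately have "eventually (\<lambda>k. measure lebesgue S - \<eta> < measure lebesgue (A k)) sequentially"
    using \<open>0 < \<eta>\<close> by (intro order_tendstoD(1)) auto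
  then obtain k where "measure lebesgue S - \<eta> < measure lebesgue (A k)"
    using eventually_happens'[OF sequentially_bot] by blast
  then show thesis using that[of "1 / real (Suc k)"] by (simp add: A_def)
qed

lemma closed_subset_bounded_below_of_AE_pos:
  fixes f :: "real \<Rightarrow> real"
  assumes f: "set_borel_measurable lebesgue S f" and S: "S \<in> lmeasurable"
    and pos: "AE x in lebesgue. x \<in> S \<longrightarrow> 0 < f x" and "0 < \<eta>"
  obtains \<epsilon> K where "0 < \<epsilon>" "closed K" "K \<subseteq> S" "\<And>x. x \<in> K \<Longrightarrow> \<epsilon> \<le> f x"
    "measure lebesgue S - \<eta> < measure lebesgue K"
proof -
  obtain \<epsilon> where \<epsilon>: "0 < \<epsilon>" "measure lebesgue S - \<eta> / 2 < measure lebesgue {x \<in> S. \<epsilon> \<le> f x}"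
    using large_superlevel_set_of_AE_pos[OF f S pos, of "\<eta> / 2"] \<open>0 < \<eta>\<close> by auto
  define A where "A = {x \<in> S. \<epsilon> \<le> f x}"
  have "A \<in> sets lebesgue"
    using set_borel_measurable_sets[OF f _ fmeasurableD[OF S], of "{\<epsilon>..}"]
    by (simp add: A_def vimage_def Int_def conj_commute)
  then have A: "A \<in> lmeasurable" using fmeasurableI2[OF S, of A] by (auto simp: A_def)
  obtain T where T: "closed T" "T \<subseteq> A" "A - T \<in> lmeasurable" "emeasure lebesgue (A - T) < ennreal (\<eta> / 2)"
    using sets_lebesgue_inner_closed[OF fmeasurableD[OF A], of "\<eta> / 2"] \<open>0 < \<eta>\<close> by auto
  have "measure lebesgue (A - T) < \<eta> / 2"
    using T(3,4) by (metis emeasure_eq_measure2 ennreal_less_iff measure_nonneg)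
  moreover have "measure lebesgue (A - T) = measure lebesgue A - measure lebesgue T"
  proof (rule measure_Diff)
    show "emeasure lebesgue A \<noteq> \<infinity>" using A by (metis fmeasurableD2 infinity_ennreal_def)
    show "T \<in> sets lebesgue" using T(1) by (simp add: borel_closed sets_completionI_sets)
  qed (use A T(2) in auto)
  ultimately have "measure lebesgue S - \<eta> < measure lebesgue T" using \<epsilon>(2) by (simp add: A_def)
  moreover have "T \<subseteq> S" "\<And>x. x \<in> T \<Longrightarrow> \<epsilon> \<le> f x" using T(2) by (auto simp: A_def)
  ultimately show thesis using that \<epsilon>(1) T(1) by blast
qed

lemma tendsto_sq_mult_power_zero:
  fixes x :: real assumes "0 \<le> x" "x < 1"
  shows "(\<lambda>n. (real n + 1)^2 * x^n) \<longlonglongrightarrow> 0"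
proof -
  define y where "y = sqrt x"
  have y: "0 \<le> y" "y < 1" "y^2 = x" using assms unfolding y_def by (auto simp: real_sqrt_lt_1_iff)
  have "(\<lambda>n. real n * y^n + y^n) \<longlonglongrightarrow> 0 + 0"
    using y by (intro tendsto_add powser_times_n_limit_0 LIMSEQ_realpow_zero) auto
  then have "(\<lambda>n. ((real n + 1) * y^n) * ((real n + 1) * y^n)) \<longlonglongrightarrow> 0 * 0"
    by (intro tendsto_mult) (simp_all add: algebra_simps)
  moreover have "((real n + 1) * y^n) * ((real n + 1) * y^n) = (real n + 1)^2 * x^n" for n
    using y(3) by (simp add: power2_eq_square algebra_simps flip: power_mult_distrib)
  ultimately show ?thesis by simp
qed

lemma power_mult_remez_bound_sq_tendsto_zero:
  assumes "0 < cos d" "0 \<le> r" "r * exp (16 * \<rho>) < (cos d)^2"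
  shows "(\<lambda>n. r^n * remez_bound d \<rho> n ^ 2) \<longlonglongrightarrow> 0"
proof -
  define x where "x = r * exp (16 * \<rho>) / (cos d)^2"
  have x: "0 \<le> x" "x < 1" using assms by (auto simp: x_def)
  have "r^n * remez_bound d \<rho> n ^ 2 = 4 * exp (16 * \<rho>) * ((real n + 1)^2 * x^n)" for n
  proof -
    have exp_sq: "exp (8 * real (n + 1) * \<rho>) ^ 2 = exp (16 * \<rho>) ^ (n + 1)"
      by (simp only: exp_of_nat_mult[symmetric] power2_eq_square exp_add[symmetric]) (simp add: algebra_simps)
    have "r^n * remez_bound d \<rho> n ^ 2 = 4 * (real n + 1)^2 * exp (8 * real (n + 1) * \<rho>) ^ 2 * r^n / (cos d ^ n)^2"
      by (simp add: remez_bound_def power_mult_distrib power_divide power2_eq_square algebra_simps)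
    also have "\<dots> = 4 * exp (16 * \<rho>) * ((real n + 1)^2 * x^n)"
      unfolding exp_sq x_def by (simp add: power_divide power_mult_distrib field_simps flip: power_mult)
    finally show ?thesis .
  qed
  then show ?thesis
    using tendsto_mult_right_zero[OF tendsto_sq_mult_power_zero[OF x], of "4 * exp (16 * \<rho>)"] by simp
qed

lemma obtain_small_at_right_0:
  fixes P :: "real \<Rightarrow> bool"
  assumes "eventually P (at_right 0)" "0 < c"
  obtains x where "0 < x" "x \<le> c" "P x"
proof -
  obtain b where "0 < b" "\<And>y. 0 < y \<Longrightarrow> y < b \<Longrightarrow> P y"
    using assms(1) by (auto simp: eventually_at_right_field)
  then show thesis using that[of "min (b / 2) c"] \<open>0 < c\<close> by auto
qed

lemma sigma2_ge_of_AE_pos: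
  fixes f :: "real \<Rightarrow> real"
  assumes nonneg: "\<And>l. l \<in> {-pi..pi} \<Longrightarrow> 0 \<le> f l"
    and integrable: "set_integrable lebesgue {-pi..pi} f"
    and pos: "AE x in lebesgue. x \<in> {0..d} \<longrightarrow> 0 < f x"
    and d: "0 < d" "d \<le> 1" and "0 < \<rho>"
  obtains C where "0 < C" "\<And>n. C / remez_bound d \<rho> n ^ 2 \<le> sigma2 n f"
proof -
  define \<tau> where "\<tau> = d / (1 + \<rho>^4)"
  have "0 < 1 + \<rho>^4" by (simp add: add_pos_nonneg)
  then have \<tau>: "\<tau> < d" "d = (1 + \<rho>^4) * \<tau>"
    using d(1) \<open>0 < \<rho>\<close> by (simp_all add: \<tau>_def divide_less_eq)
  define \<gamma> where "\<gamma> = (d - \<tau>) / 2"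
  have "0 < \<gamma>" using \<tau>(1) by (simp add: \<gamma>_def)
  have "set_borel_measurable lebesgue {0..d} f"
    using set_borel_measurable_if_set_integrable[OF integrable]
    by (rule set_borel_measurable_subset) (use d pi_gt3 in auto)
  then obtain \<epsilon> K where K: "0 < \<epsilon>" "closed K" "K \<subseteq> {0..d}" "\<And>x. x \<in> K \<Longrightarrow> \<epsilon> \<le> f x"
    "d - \<gamma> < measure lebesgue K"
    using closed_subset_bounded_below_of_AE_pos[of "{0..d}" f \<gamma>] pos \<open>0 < \<gamma>\<close> d by auto
  have "\<tau> \<le> measure lebesgue K - \<gamma>" using K(5) by (simp add: \<gamma>_def field_simps)
  then have "d \<le> (1 + \<rho>^4) * (measure lebesgue K - \<gamma>)"
    unfolding \<tau>(2) using \<open>0 < 1 + \<rho>^4\<close> by (intro mult_left_mono) auto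
  moreover have "0 < cos d" using d pi_gt3 by (intro cos_gt_zero) auto
  ultimately have "\<epsilon> * \<gamma> / remez_bound d \<rho> n ^ 2 \<le> sigma2 n f" for n
    using d \<open>0 < \<rho>\<close> pi_gt3 \<open>0 < \<gamma>\<close> K
    by (intro sigma2_ge_of_closed_subset[OF nonneg integrable]) auto
  then show thesis using that[of "\<epsilon> * \<gamma>"] K(1) \<open>0 < \<gamma>\<close> by auto
qed

lemma sigma2_not_eventually_less_power:
  fixes f :: "real \<Rightarrow> real"
  assumes nonneg: "\<And>l. l \<in> {-pi..pi} \<Longrightarrow> 0 \<le> f l"
    and integrable: "set_integrable lebesgue {-pi..pi} f"
    and pos: "AE x in lebesgue. x \<in> {0..d\<^sub>0} \<longrightarrow> 0 < f x" "0 < d\<^sub>0"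
    and r: "0 < r" "r < 1"
  shows "\<not> eventually (\<lambda>n. sigma2 n f < r^n) sequentially"
proof
  assume small: "eventually (\<lambda>n. sigma2 n f < r^n) sequentially"
  have "eventually (\<lambda>d. r < (cos d)^2) (at_right 0)"
    using r by (intro order_tendstoD(1)) (auto intro!: tendsto_eq_intros)
  then obtain d where d: "0 < d" "d \<le> min d\<^sub>0 1" "r < (cos d)^2"
    using obtain_small_at_right_0[of _ "min d\<^sub>0 1"] pos(2) by auto
  have "eventually (\<lambda>\<rho>. r * exp (16 * \<rho>) < (cos d)^2) (at_right 0)"
    using d by (intro order_tendstoD(2)) (auto intro!: tendsto_eq_intros)
  then obtain \<rho> where \<rho>: "0 < \<rho>" "r * exp (16 * \<rho>) < (cos d)^2"
    using obtain_small_at_right_0[of _ 1] by auto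
  have "AE x in lebesgue. x \<in> {0..d} \<longrightarrow> 0 < f x"
    using pos(1) d by (auto elim: eventually_mono)
  then obtain C where C: "0 < C" "\<And>n. C / remez_bound d \<rho> n ^ 2 \<le> sigma2 n f"
    using sigma2_ge_of_AE_pos[OF nonneg integrable _ _ _ \<rho>(1)] d by auto
  have cos_d: "0 < cos d" using d pi_gt3 by (intro cos_gt_zero) auto
  have "eventually (\<lambda>n. r^n * remez_bound d \<rho> n ^ 2 < C) sequentially"
    using power_mult_remez_bound_sq_tendsto_zero[OF cos_d _ \<rho>(2)] r C(1)
    by (intro order_tendstoD(2)) auto
  with small have "eventually (\<lambda>n. sigma2 n f < r^n \<and> r^n * remez_bound d \<rho> n ^ 2 < C) sequentially"
    by (rule eventually_conj)
  then obtain n where n: "sigma2 n f < r^n" "r^n * remez_bound d \<rho> n ^ 2 < C"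
    by (auto dest: eventually_happens'[OF sequentially_bot])
  have W: "0 < remez_bound d \<rho> n ^ 2" using cos_d by (simp add: remez_bound_def)
  then have "C \<le> sigma2 n f * remez_bound d \<rho> n ^ 2"
    using C(2)[of n] by (simp add: divide_le_eq)
  then show False
    using mult_strict_right_mono[OF n(1) W] n(2) by linarith
qed

lemma limsup_root_less_1_imp_eventually_less_power:
  fixes s :: "nat \<Rightarrow> real"
  assumes "limsup (\<lambda>n. ereal (root n (s n))) < 1"
  obtains r where "0 < r" "r < 1" "eventually (\<lambda>n. s n < r^n) sequentially"
proof -
  obtain r\<^sub>0 where r\<^sub>0: "limsup (\<lambda>n. ereal (root n (s n))) < ereal r\<^sub>0" "r\<^sub>0 < 1"
    using ereal_dense2[OF assms] by auto
  define r where "r = max r\<^sub>0 (1 / 2)"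
  have r: "limsup (\<lambda>n. ereal (root n (s n))) < ereal r" "0 < r" "r < 1"
    using r\<^sub>0 by (auto simp: r_def elim: order.strict_trans2)
  have "eventually (\<lambda>n. s n < r^n) sequentially"
    using Limsup_lessD[OF r(1)] eventually_gt_at_top[of 0]
  proof eventually_elim
    case (elim n)
    show ?case
    proof (cases "s n \<le> 0")
      case True
      then show ?thesis using \<open>0 < r\<close> by (smt (verit) zero_less_power)
    next
      case False
      then have "s n = root n (s n) ^ n" using elim by (simp add: real_root_pow_pos2)
      also have "\<dots> < r^n" using elim False by (intro power_strict_mono) auto
      finally show ?thesis .
    qed
  qed
  with r(2,3) show thesis by (rule that)
qed

lemma AE_pos_near_0_if_zeros_null:
  fixes f :: "real \<Rightarrow> real"
  assumes nonneg: "\<And>l. l \<in> {-pi..pi} \<Longrightarrow> 0 \<le> f l"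
    and integrable: "set_integrable lebesgue {-pi..pi} f"
    and U: "open U" "0 \<in> U" and null: "emeasure lebesgue {l \<in> U \<inter> {-pi..pi}. f l = 0} = 0"
  obtains d\<^sub>0 where "0 < d\<^sub>0" "AE x in lebesgue. x \<in> {0..d\<^sub>0} \<longrightarrow> 0 < f x"
proof -
  obtain e where e: "0 < e" "ball 0 e \<subseteq> U" using U open_contains_ball by blast
  define d\<^sub>0 where "d\<^sub>0 = min (e / 2) 1"
  have near_0: "{0..d\<^sub>0} \<subseteq> U \<inter> {-pi..pi}"
    using e pi_gt3 by (auto simp: d\<^sub>0_def dist_real_def subset_iff)
  have "f -` {0} \<inter> {-pi..pi} \<in> sets lebesgue"
    using set_borel_measurable_sets[OF set_borel_measurable_if_set_integrable[OF integrable], of "{0}"] by auto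
  moreover have "U \<in> sets lebesgue" using U by (simp add: borel_open sets_completionI_sets)
  moreover have "{l \<in> U \<inter> {-pi..pi}. f l = 0} = U \<inter> (f -` {0} \<inter> {-pi..pi})" by auto
  ultimately have "{l \<in> U \<inter> {-pi..pi}. f l = 0} \<in> null_sets lebesgue"
    using null by (metis sets.Int null_setsI)
  then have "AE x in lebesgue. x \<in> {0..d\<^sub>0} \<longrightarrow> 0 < f x"
  proof (rule AE_I')
    show "{x \<in> space lebesgue. \<not> (x \<in> {0..d\<^sub>0} \<longrightarrow> 0 < f x)} \<subseteq> {l \<in> U \<inter> {-pi..pi}. f l = 0}"
    proof
      fix x assume "x \<in> {x \<in> space lebesgue. \<not> (x \<in> {0..d\<^sub>0} \<longrightarrow> 0 < f x)}"
      then have "x \<in> U \<inter> {-pi..pi}" "f x \<le> 0" using near_0 by auto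
      then show "x \<in> {l \<in> U \<inter> {-pi..pi}. f l = 0}" using nonneg[of x] by auto
    qed
  qed
  moreover have "0 < d\<^sub>0" using e by (simp add: d\<^sub>0_def)
  ultimately show thesis using that by blast
qed

theorem corollary8p1:
  fixes f :: "real \<Rightarrow> real"
  assumes nonneg: "\<And>l. l \<in> {-pi..pi} \<Longrightarrow> f l \<ge> 0"
    and integrable: "set_integrable lebesgue {-pi..pi} f"
    and pos: "(LINT l:{-pi..pi}|lebesgue. f l) > 0"
    and expdecay: "limsup (\<lambda>n. ereal (root n (sigma2 n f))) < 1"
  shows "\<forall>U. open U \<and> 0 \<in> U \<longrightarrow>
           emeasure lebesgue {l \<in> U \<inter> {-pi..pi}. f l = 0} > 0"
proof (intro allI impI)
  fix U :: "real set" assume U: "open U \<and> 0 \<in> U"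
  show "0 < emeasure lebesgue {l \<in> U \<inter> {-pi..pi}. f l = 0}"
  proof (rule ccontr)
    assume "\<not> ?thesis"
    then have "emeasure lebesgue {l \<in> U \<inter> {-pi..pi}. f l = 0} = 0" by (simp add: not_gr_zero)
    with U obtain d\<^sub>0 where d\<^sub>0: "0 < d\<^sub>0" "AE x in lebesgue. x \<in> {0..d\<^sub>0} \<longrightarrow> 0 < f x"
      using AE_pos_near_0_if_zeros_null[OF nonneg integrable] by blast
    obtain r where r: "0 < r" "r < 1" "eventually (\<lambda>n. sigma2 n f < r^n) sequentially"
      using expdecay by (rule limsup_root_less_1_imp_eventually_less_power)
    show False
      using sigma2_not_eventually_less_power[OF nonneg integrable d\<^sub>0(2,1) r(1,2)] r(3) by contradiction
  qed
qed

end
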